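(* Let $\mathcal{B}$ be a history-deterministic generalised coBüchi automaton recognising a language $L\subseteq\Sigma^\omega$. Let $\mathcal{A}_{\min}$ be a nice, safe minimal and safe centralised history-deterministic coBüchi automaton recognising $L$, with safe components having state sets $S_1,\dots,S_k$. Let $R_1,\dots,R_m$ be the distinct residuals of $L$, let $Q^{R_j}$ be the set of states of $\mathcal{A}_{\min}$ whose language (taken as initial state) is $R_j$, and $n_j=\max_{1\le i\le k}|S_i\cap Q^{R_j}|$. Then $\mathcal{B}$ has at least $n_1+n_2+\cdots+n_m$ states (that is, at least as many states as the automaton $\mathcal{A}_{\mathrm{gen}}$ obtained by taking $n_j$ copies of the state for each residual $R_j$).
   Context: An automaton is a tuple $(Q,\Sigma,q_{\mathrm{init}},\Delta,\Gamma,\mathrm{col},W)$ with finite state set, finite input alphabet $\Sigma$, initial state, transitions $\Delta\subseteq Q\times\Sigma\times Q$, output alphabet $\Gamma$, labelling $\mathrm{col}:\Delta\to\Gamma$, acceptance condition $W\subseteq\Gamma^\omega$. A run on $w=a_1a_2\cdots$ is a sequence $(q_0,a_1,q_1)(q_1,a_2,q_2)\cdots$ of transitions with $q_0=q_{\mathrm{init}}$, accepting if its label sequence is in $W$; $\mathcal{L}(\mathcal{A})$ is the set of words with an accepting run. With a finite colour set $C$ and $\Gamma=2^C$, generalised coBüchi means $W=\{x : \text{some } c\in C \text{ occurs in only finitely many letters of } x\}$; a coBüchi automaton is the case $C=\{1\}$, its coBüchi transitions being those labelled $\{1\}$. A resolver is a map $\sigma:\Sigma^+\to\Delta$ such that for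 every $w=a_0a_1\cdots$, $\sigma(a_0)\sigma(a_0a_1)\cdots$ is a run on $w$, accepting whenever $w\in\mathcal{L}(\mathcal{A})$; history-deterministic means a resolver exists. The residual of $L$ with respect to $u\in\Sigma^*$ is $u^{-1}L=\{w : uw\in L\}$. For a coBüchi automaton: $\mathcal{A}_{\mathrm{safe}}$ is obtained by deleting coBüchi transitions; a safe component is a strongly connected component of $\mathcal{A}_{\mathrm{safe}}$; the safe language of $q$ is the set of words with an infinite path from $q$ in $\mathcal{A}_{\mathrm{safe}}$; two states are equivalent if the automaton started from each recognises the same language. Semantically deterministic: $(q,a,p_1),(q,a,p_2)\in\Delta$ implies $p_1,p_2$ equivalent; normal form: transitions between different safe components are coBüchi transitions; safe deterministic: $\mathcal{A}_{\mathrm{safe}}$ deterministic; nice: all states reachable, semantically deterministic, normal form, safe deterministic. Safe centralised: equivalent states with inclusion-comparable safe languages lie in the same safe component; safe minimal: equivalent states with equal safe languages are equal. *)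

theory Defs
  imports Main
begin

text \<open>The output alphabet Gamma is
  the type 'g; the acceptance condition W is a set of infinite words over 'g.\<close>

record ('q, 'a, 'g) automaton =
  states :: "'q set"
  alph   :: "'a set"
  init   :: 'q
  trans  :: "('q \<times> 'a \<times> 'q) set"
  col    :: "'q \<times> 'a \<times> 'q \<Rightarrow> 'g"
  accc   :: "(nat \<Rightarrow> 'g) set"

definition well_formed :: "('q, 'a, 'g) automaton \<Rightarrow> bool" where
  "well_formed A \<longleftrightarrow> finite (states A) \<and> finite (alph A) \<and> init A \<in> states A \<and>
     trans A \<subseteq> states A \<times> alph A \<times> states A"

definition is_word :: "'a set \<Rightarrow> (nat \<Rightarrow> 'a) \<Rightarrow> bool" where
  "is_word \<Sigma> w \<longleftrightarrow> (\<forall>i. w i \<in> \<Sigma>)"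

definition run_from :: "('q, 'a, 'g) automaton \<Rightarrow> 'q \<Rightarrow> (nat \<Rightarrow> 'a) \<Rightarrow> (nat \<Rightarrow> 'q \<times> 'a \<times> 'q) \<Rightarrow> bool" where
  "run_from A q w r \<longleftrightarrow> fst (r 0) = q \<and>
     (\<forall>i. r i \<in> trans A \<and> fst (snd (r i)) = w i \<and> snd (snd (r i)) = fst (r (Suc i)))"

definition accepting :: "('q, 'a, 'g) automaton \<Rightarrow> (nat \<Rightarrow> 'q \<times> 'a \<times> 'q) \<Rightarrow> bool" where
  "accepting A r \<longleftrightarrow> (\<lambda>i. col A (r i)) \<in> accc A"

definition lang_from :: "('q, 'a, 'g) automaton \<Rightarrow> 'q \<Rightarrow> (nat \<Rightarrow> 'a) set" where
  "lang_from A q = {w. is_word (alph A) w \<and> (\<exists>r. run_from A q w r \<and> accepting A r)}"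

definition lang :: "('q, 'a, 'g) automaton \<Rightarrow> (nat \<Rightarrow> 'a) set" where
  "lang A = lang_from A (init A)"

definition prefix :: "(nat \<Rightarrow> 'a) \<Rightarrow> nat \<Rightarrow> 'a list" where
  "prefix w n = map w [0..<n]"

text \<open>A resolver sigma : Sigma^+ -> Delta (on nonempty finite words).\<close>
definition resolver :: "('q, 'a, 'g) automaton \<Rightarrow> ('a list \<Rightarrow> 'q \<times> 'a \<times> 'q) \<Rightarrow> bool" where
  "resolver A \<sigma> \<longleftrightarrow> (\<forall>w. is_word (alph A) w \<longrightarrow>
      run_from A (init A) w (\<lambda>i. \<sigma> (prefix w (Suc i))) \<and>
      (w \<in> lang A \<longrightarrow> accepting A (\<lambda>i. \<sigma> (prefix w (Suc i)))))"

definition history_deterministic :: "('q, 'a, 'g) automaton \<Rightarrow> bool" where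
  "history_deterministic A \<longleftrightarrow> (\<exists>\<sigma>. resolver A \<sigma>)"

definition gen_coBuchi :: "('q, 'a, 'c set) automaton \<Rightarrow> 'c set \<Rightarrow> bool" where
  "gen_coBuchi A C \<longleftrightarrow> well_formed A \<and> finite C \<and> (\<forall>t\<in>trans A. col A t \<subseteq> C) \<and>
     accc A = {x. \<exists>c\<in>C. finite {i. c \<in> x i}}"

definition coBuchi :: "('q, 'a, nat set) automaton \<Rightarrow> bool" where
  "coBuchi A \<longleftrightarrow> gen_coBuchi A {1}"

definition coBuchi_trans :: "('q, 'a, nat set) automaton \<Rightarrow> ('q \<times> 'a \<times> 'q) set" where
  "coBuchi_trans A = {t \<in> trans A. col A t = {1}}"

definition safe_trans :: "('q, 'a, nat set) automaton \<Rightarrow> ('q \<times> 'a \<times> 'q) set" where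
  "safe_trans A = trans A - coBuchi_trans A"

definition safe_reach :: "('q, 'a, nat set) automaton \<Rightarrow> ('q \<times> 'q) set" where
  "safe_reach A = {(p, q). \<exists>a. (p, a, q) \<in> safe_trans A}\<^sup>*"

definition safe_component_of :: "('q, 'a, nat set) automaton \<Rightarrow> 'q \<Rightarrow> 'q set" where
  "safe_component_of A q = {p \<in> states A. (q, p) \<in> safe_reach A \<and> (p, q) \<in> safe_reach A}"

definition safe_components :: "('q, 'a, nat set) automaton \<Rightarrow> 'q set set" where
  "safe_components A = safe_component_of A ` states A"

definition safe_lang :: "('q, 'a, nat set) automaton \<Rightarrow> 'q \<Rightarrow> (nat \<Rightarrow> 'a) set" where
  "safe_lang A q = {w. is_word (alph A) w \<and>
     (\<exists>r. fst (r 0) = q \<and> (\<forall>i. r i \<in> safe_trans A \<and> fst (snd (r i)) = w i \<and>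
                                  snd (snd (r i)) = fst (r (Suc i))))}"

definition equivalent_states :: "('q, 'a, 'g) automaton \<Rightarrow> 'q \<Rightarrow> 'q \<Rightarrow> bool" where
  "equivalent_states A p q \<longleftrightarrow> lang_from A p = lang_from A q"

definition all_reachable :: "('q, 'a, 'g) automaton \<Rightarrow> bool" where
  "all_reachable A \<longleftrightarrow> (\<forall>q\<in>states A. (init A, q) \<in> {(p, p'). \<exists>a. (p, a, p') \<in> trans A}\<^sup>*)"

definition semantically_deterministic :: "('q, 'a, 'g) automaton \<Rightarrow> bool" where
  "semantically_deterministic A \<longleftrightarrow>
     (\<forall>q a p1 p2. (q, a, p1) \<in> trans A \<longrightarrow> (q, a, p2) \<in> trans A \<longrightarrow> equivalent_states A p1 p2)"

definition normal_form :: "('q, 'a, nat set) automaton \<Rightarrow> bool" where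
  "normal_form A \<longleftrightarrow> (\<forall>p a q. (p, a, q) \<in> trans A \<longrightarrow>
      safe_component_of A p \<noteq> safe_component_of A q \<longrightarrow> (p, a, q) \<in> coBuchi_trans A)"

definition safe_deterministic :: "('q, 'a, nat set) automaton \<Rightarrow> bool" where
  "safe_deterministic A \<longleftrightarrow>
     (\<forall>q a p1 p2. (q, a, p1) \<in> safe_trans A \<longrightarrow> (q, a, p2) \<in> safe_trans A \<longrightarrow> p1 = p2)"

definition nice :: "('q, 'a, nat set) automaton \<Rightarrow> bool" where
  "nice A \<longleftrightarrow> all_reachable A \<and> semantically_deterministic A \<and> normal_form A \<and> safe_deterministic A"

definition safe_centralised :: "('q, 'a, nat set) automaton \<Rightarrow> bool" where
  "safe_centralised A \<longleftrightarrow> (\<forall>p\<in>states A. \<forall>q\<in>states A. equivalent_states A p q \<longrightarrow>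
      (safe_lang A p \<subseteq> safe_lang A q \<or> safe_lang A q \<subseteq> safe_lang A p) \<longrightarrow>
      safe_component_of A p = safe_component_of A q)"

definition safe_minimal :: "('q, 'a, nat set) automaton \<Rightarrow> bool" where
  "safe_minimal A \<longleftrightarrow> (\<forall>p\<in>states A. \<forall>q\<in>states A. equivalent_states A p q \<longrightarrow>
      safe_lang A p = safe_lang A q \<longrightarrow> p = q)"

definition conc :: "'a list \<Rightarrow> (nat \<Rightarrow> 'a) \<Rightarrow> (nat \<Rightarrow> 'a)" where
  "conc u w = (\<lambda>i. if i < length u then u ! i else w (i - length u))"

definition residual :: "(nat \<Rightarrow> 'a) set \<Rightarrow> 'a list \<Rightarrow> (nat \<Rightarrow> 'a) set" where
  "residual L u = {w. conc u w \<in> L}"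

definition residuals :: "'a set \<Rightarrow> (nat \<Rightarrow> 'a) set \<Rightarrow> (nat \<Rightarrow> 'a) set set" where
  "residuals \<Sigma> L = {residual L u | u. set u \<subseteq> \<Sigma>}"

definition states_of_residual :: "('q, 'a, 'g) automaton \<Rightarrow> (nat \<Rightarrow> 'a) set \<Rightarrow> 'q set" where
  "states_of_residual A R = {q \<in> states A. lang_from A q = R}"

end

(*
  For every safe component S of the minimal automaton A we construct an injection from S into
  the states of B preserving the language of each state. States of B with different languages
  are different, so summing over the residuals gives the bound.

  If some state of S has no safe successor in S, then S is that single state. Otherwise a safe
  run inside S exists and is accepting, and a run of the resolver of B meeting every colour infinitely often would be
  rejecting; hence there are a history h, leading to a state p0 of S, and a colour c that the
  resolver of B never meets while it reads, after h, the labels of safe paths from p0. The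
  transitions it takes there (the shadow of S) avoid c, so every shadow run is accepted by B,
  and by the symmetric argument the resolver of A eventually follows every shadow run along
  safe transitions. So some shadow state, and then every shadow state reached along a safe path
  of S, is covered: an equivalent state of A has a safe language containing its shadow language.
  For a state of S with maximal safe language, safe centralisation puts the covering state into
  S, so shadow language and safe language coincide; this equality propagates along the safe
  paths of S, and safe minimality makes the resulting map injective.
*)
theory Submission
  imports Defs
begin

section \<open>Words\<close>

lemma prefix_0 [simp]: "prefix w 0 = []"
  by (simp add: prefix_def)

lemma prefix_Suc: "prefix w (Suc n) = prefix w n @ [w n]"
  by (simp add: prefix_def)

lemma set_prefix: "is_word \<Sigma> w \<Longrightarrow> set (prefix w n) \<subseteq> \<Sigma>"
  by (auto simp: is_word_def prefix_def)

lemma conc_Nil [simp]: "conc [] w = w"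
  by (simp add: conc_def)

lemma conc_Cons_0 [simp]: "conc (a # u) w 0 = a"
  by (simp add: conc_def)

lemma conc_Cons_Suc [simp]: "conc (a # u) w (Suc i) = conc u w i"
  by (simp add: conc_def)

lemma conc_append: "conc (u @ v) w = conc u (conc v w)"
  by (auto simp: conc_def nth_append fun_eq_iff)

lemma conc_shift: "(\<lambda>i. conc u w (i + length u)) = w"
  by (simp add: conc_def)

lemma prefix_conc: "n \<le> length u \<Longrightarrow> prefix (conc u w) n = take n u"
  by (auto simp: prefix_def conc_def intro: nth_equalityI)

lemma prefix_conc_add: "prefix (conc u w) (length u + m) = u @ prefix w m"
  by (auto simp: prefix_def conc_def nth_append intro!: nth_equalityI)

lemma is_word_conc: "is_word \<Sigma> (conc u w) \<longleftrightarrow> set u \<subseteq> \<Sigma> \<and> is_word \<Sigma> w"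
proof
  assume w: "is_word \<Sigma> (conc u w)"
  have "u ! i \<in> \<Sigma>" if "i < length u" for i
  proof -
    have "conc u w i \<in> \<Sigma>" using w by (simp add: is_word_def)
    with that show ?thesis by (simp add: conc_def)
  qed
  moreover have "is_word \<Sigma> w"
    using w conc_shift[of u w] unfolding is_word_def by metis
  ultimately show "set u \<subseteq> \<Sigma> \<and> is_word \<Sigma> w"
    by (auto simp: in_set_conv_nth)
qed (auto simp: is_word_def conc_def)

lemma residual_Nil [simp]: "residual L [] = L"
  by (simp add: residual_def)

lemma residual_append: "residual (residual L u) v = residual L (u @ v)"
  by (simp add: residual_def conc_append)

lemma finite_shift_iff: "finite {i. P (i + k)} \<longleftrightarrow> finite {i::nat. P i}"
proof
  assume "finite {i. P (i + k)}"
  moreover have "{i. P i} \<subseteq> {..<k} \<union> (\<lambda>i. i + k) ` {i. P (i + k)}"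
  proof
    fix i assume "i \<in> {i. P i}"
    then show "i \<in> {..<k} \<union> (\<lambda>i. i + k) ` {i. P (i + k)}"
      by (cases "i < k") (auto intro!: image_eqI[of _ _ "i - k"])
  qed
  ultimately show "finite {i. P i}" by (meson finite_Un finite_imageI finite_lessThan finite_subset)
next
  assume "finite {i. P i}"
  then have "finite ((\<lambda>i. i + k) -` {i. P i})" by (rule finite_vimageI) (simp add: inj_on_def)
  then show "finite {i. P (i + k)}" by (simp add: vimage_def)
qed

lemma infinite_positions_conc:
  fixes n :: "nat \<Rightarrow> nat"
  assumes "strict_mono n" "infinite K" "\<forall>k\<in>K. P (h @ prefix w (Suc (n k)))"
  shows "infinite {i. P (prefix (conc h w) (Suc i))}"
proof
  assume fin: "finite {i. P (prefix (conc h w) (Suc i))}"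
  have "(\<lambda>k. length h + n k) ` K \<subseteq> {i. P (prefix (conc h w) (Suc i))}"
    using assms(3) prefix_conc_add[of h w "Suc _"] by auto
  then have "finite ((\<lambda>k. length h + n k) ` K)"
    using fin by (rule finite_subset)
  moreover have "inj_on (\<lambda>k. length h + n k) K"
    using strict_mono_imp_inj_on[OF assms(1), of K] by (simp add: inj_on_def)
  ultimately show False
    using assms(2) by (simp add: finite_image_iff)
qed

lemma ex_fair_enumeration:
  assumes "finite C" "C \<noteq> {}"
  shows "\<exists>f :: nat \<Rightarrow> 'c. (\<forall>k. f k \<in> C) \<and> (\<forall>c\<in>C. infinite {k. f k = c})"
proof -
  obtain l where l: "set l = C" using finite_list[OF assms(1)] by blast
  with assms(2) have "l \<noteq> []" by auto
  define f where "f k = l ! (k mod length l)" for k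
  have "f k \<in> C" for k
    using l \<open>l \<noteq> []\<close> nth_mem[of "k mod length l" l] by (simp add: f_def)
  moreover have "infinite {k. f k = c}" if c: "c \<in> C" for c
  proof -
    obtain j where j: "j < length l" "l ! j = c"
      using l c by (auto simp: in_set_conv_nth)
    then have "range (\<lambda>x. j + x * length l) \<subseteq> {k. f k = c}"
      by (auto simp: f_def)
    moreover have "infinite (range (\<lambda>x. j + x * length l))"
      using \<open>l \<noteq> []\<close> infinite_UNIV_nat finite_imageD[of "\<lambda>x. j + x * length l" UNIV]
      by (auto simp: inj_on_def)
    ultimately show ?thesis by (rule infinite_super)
  qed
  ultimately show ?thesis by blast
qed

section \<open>Finite paths and infinite runs over a set of transitions\<close>

fun path :: "('q \<times> 'a \<times> 'q) set \<Rightarrow> 'q \<Rightarrow> ('q \<times> 'a \<times> 'q) list \<Rightarrow> 'q \<Rightarrow> bool" where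
  "path T q [] q' \<longleftrightarrow> q = q'"
| "path T q (t # ts) q' \<longleftrightarrow> t \<in> T \<and> fst t = q \<and> path T (snd (snd t)) ts q'"

definition labels :: "('q \<times> 'a \<times> 'q) list \<Rightarrow> 'a list" where
  "labels ts = map (\<lambda>t. fst (snd t)) ts"

lemma labels_simps [simp]:
  "labels [] = []" "labels (t # ts) = fst (snd t) # labels ts"
  "labels (xs @ ys) = labels xs @ labels ys" "length (labels ts) = length ts"
  by (simp_all add: labels_def)

lemma labels_eq_Nil_iff [simp]: "labels ts = [] \<longleftrightarrow> ts = []"
  by (simp add: labels_def)

lemma path_append: "path T q (xs @ ys) q'' \<longleftrightarrow> (\<exists>q'. path T q xs q' \<and> path T q' ys q'')"
  by (induction xs arbitrary: q) auto

lemma path_snoc: "path T q (ts @ [t]) q' \<longleftrightarrow> path T q ts (fst t) \<and> t \<in> T \<and> q' = snd (snd t)"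
  by (auto simp: path_append)

lemma path_mono: "path T q ts q' \<Longrightarrow> T \<subseteq> T' \<Longrightarrow> path T' q ts q'"
  by (induction ts arbitrary: q) auto

lemma path_take: "path T q ts q' \<Longrightarrow> \<exists>q''. path T q (take m ts) q''"
  by (metis append_take_drop_id path_append)

lemma path_labels_in_alph:
  "well_formed A \<Longrightarrow> path (trans A) q ts q' \<Longrightarrow> set (labels ts) \<subseteq> alph A"
  by (induction ts arbitrary: q) (auto simp: well_formed_def)

lemma path_target_in_states:
  "well_formed A \<Longrightarrow> path (trans A) q ts q' \<Longrightarrow> q \<in> states A \<Longrightarrow> q' \<in> states A"
  by (induction ts arbitrary: q) (auto simp: well_formed_def)

lemma path_if_rtrancl:
  "(p, q) \<in> {(p, p'). \<exists>a. (p, a, p') \<in> T}\<^sup>* \<Longrightarrow> \<exists>ts. path T p ts q"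
proof (induction rule: rtrancl_induct)
  case base
  have "path T p [] p" by simp
  then show ?case by blast
next
  case (step q q')
  obtain ts where "path T p ts q" using step.IH ..
  moreover obtain a where "(q, a, q') \<in> T" using step.hyps(2) by blast
  ultimately have "path T p (ts @ [(q, a, q')]) q'" by (simp add: path_snoc)
  then show ?case by blast
qed

definition deterministic :: "('q \<times> 'a \<times> 'q) set \<Rightarrow> bool" where
  "deterministic T \<longleftrightarrow> (\<forall>q a p1 p2. (q, a, p1) \<in> T \<longrightarrow> (q, a, p2) \<in> T \<longrightarrow> p1 = p2)"

lemma path_deterministic:
  "deterministic T \<Longrightarrow> path T q ts1 q1 \<Longrightarrow> path T q ts2 q2 \<Longrightarrow> labels ts1 = labels ts2 \<Longrightarrow> q1 = q2"
proof (induction ts1 arbitrary: q ts2)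
  case Nil
  then show ?case by (cases ts2) auto
next
  case (Cons t ts1)
  then obtain t2 ts2' where ts2: "ts2 = t2 # ts2'" by (cases ts2) auto
  with Cons.prems have "snd (snd t) = snd (snd t2)"
    unfolding deterministic_def by (cases t, cases t2) auto
  with Cons ts2 show ?case by auto
qed

definition inf_run :: "('q \<times> 'a \<times> 'q) set \<Rightarrow> 'q \<Rightarrow> (nat \<Rightarrow> 'a) \<Rightarrow> (nat \<Rightarrow> 'q \<times> 'a \<times> 'q) \<Rightarrow> bool" where
  "inf_run T q w r \<longleftrightarrow>
     fst (r 0) = q \<and> (\<forall>i. r i \<in> T \<and> fst (snd (r i)) = w i \<and> snd (snd (r i)) = fst (r (Suc i)))"

definition run_lang :: "('q \<times> 'a \<times> 'q) set \<Rightarrow> 'q \<Rightarrow> (nat \<Rightarrow> 'a) set" where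
  "run_lang T q = {w. \<exists>r. inf_run T q w r}"

lemma run_from_eq_inf_run: "run_from A = inf_run (trans A)"
  by (simp add: fun_eq_iff run_from_def inf_run_def)

lemma inf_run_mono: "inf_run T q w r \<Longrightarrow> T \<subseteq> T' \<Longrightarrow> inf_run T' q w r"
  by (auto simp: inf_run_def)

lemma inf_run_is_word:
  "well_formed A \<Longrightarrow> T \<subseteq> trans A \<Longrightarrow> inf_run T q w r \<Longrightarrow> is_word (alph A) w"
  unfolding is_word_def inf_run_def well_formed_def
  by (metis (no_types, lifting) mem_Sigma_iff prod.collapse subsetD)

lemma inf_run_prefix:
  "inf_run T q w r \<Longrightarrow> path T q (map r [0..<k]) (fst (r k)) \<and> labels (map r [0..<k]) = prefix w k"
  by (induction k) (auto simp: path_snoc inf_run_def prefix_Suc)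

lemma inf_run_shift: "inf_run T q w r \<Longrightarrow> inf_run T (fst (r k)) (\<lambda>i. w (i + k)) (\<lambda>i. r (i + k))"
  by (simp add: inf_run_def)

lemma inf_run_conc:
  "path T q ts q' \<Longrightarrow> inf_run T q' w r \<Longrightarrow> inf_run T q (conc (labels ts) w) (conc ts r)"
proof (induction ts arbitrary: q)
  case Nil
  then show ?case by simp
next
  case (Cons t ts)
  then have IH: "inf_run T (snd (snd t)) (conc (labels ts) w) (conc ts r)" by simp
  have "conc (t # ts) r i \<in> T \<and> fst (snd (conc (t # ts) r i)) = conc (labels (t # ts)) w i \<and>
      snd (snd (conc (t # ts) r i)) = fst (conc (t # ts) r (Suc i))" for i
    using IH Cons.prems by (cases i) (auto simp: inf_run_def)
  with Cons.prems show ?case by (simp add: inf_run_def)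
qed

lemma inf_run_split:
  assumes "inf_run T q (conc u w) r"
  shows "path T q (map r [0..<length u]) (fst (r (length u))) \<and> labels (map r [0..<length u]) = u
    \<and> inf_run T (fst (r (length u))) w (\<lambda>i. r (i + length u))"
  using inf_run_prefix[OF assms] inf_run_shift[OF assms, of "length u"]
    prefix_conc[of "length u" u w]
  unfolding conc_shift by simp

lemma run_lang_conc: "path T q ts q' \<Longrightarrow> w \<in> run_lang T q' \<Longrightarrow> conc (labels ts) w \<in> run_lang T q"
  unfolding run_lang_def by (blast intro: inf_run_conc)

lemma run_lang_split:
  "conc u w \<in> run_lang T q \<Longrightarrow> \<exists>ts q'. path T q ts q' \<and> labels ts = u \<and> w \<in> run_lang T q'"
proof -
  assume "conc u w \<in> run_lang T q"
  then obtain r where "inf_run T q (conc u w) r" by (auto simp: run_lang_def)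
  from inf_run_split[OF this] show ?thesis by (auto simp: run_lang_def)
qed

lemma run_lang_path_residual:
  assumes det: "deterministic T" and "path T q ts q'"
  shows "run_lang T q' = residual (run_lang T q) (labels ts)"
proof -
  have "w \<in> run_lang T q'" if "conc (labels ts) w \<in> run_lang T q" for w
    using run_lang_split[OF that] path_deterministic[OF det _ assms(2)] by blast
  then show ?thesis
    using run_lang_conc[OF assms(2)] unfolding residual_def by blast
qed

lemma inf_run_if_paths:
  assumes "\<And>m. \<exists>q'. path T q (map r [0..<m]) q'"
  shows "inf_run T q (\<lambda>i. fst (snd (r i))) r"
proof -
  have "\<exists>q'. path T q (map r [0..<i] @ [r i, r (Suc i)]) q'" for i
    using assms[of "Suc (Suc i)"] by simp
  then have "\<exists>q1. path T q (map r [0..<i]) q1 \<and> r i \<in> T \<and> fst (r i) = q1 \<and>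
      snd (snd (r i)) = fst (r (Suc i))" for i
    by (auto simp: path_append)
  from this[of 0] this show ?thesis
    unfolding inf_run_def by auto
qed

lemma list_chain_limit:
  assumes extends: "\<And>k. \<exists>ys. ys \<noteq> [] \<and> xs (Suc k) = xs k @ ys"
  shows "xs k = map (\<lambda>i. xs (Suc i) ! i) [0..<length (xs k)]"
proof -
  have grows: "length (xs k) < length (xs (Suc k))" for k
    using extends[of k] by auto
  have take_xs: "take (length (xs k)) (xs m) = xs k" if "k \<le> m" for k m
    using that
  proof (induction m rule: dec_induct)
    case (step m)
    obtain ys where "xs (Suc m) = xs m @ ys" using extends by blast
    moreover have "length (xs k) \<le> length (xs m)"
      using step.IH by (metis length_take min.cobounded1)
    ultimately show ?case using step.IH by simp
  qed simp
  have length_xs: "k \<le> length (xs k)" for k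
    by (induction k) (auto intro: Suc_leI le_less_trans grows)
  have "xs k ! i = xs (Suc i) ! i" if "i < length (xs k)" for i
  proof -
    define m where "m = max k (Suc i)"
    have "xs k ! i = xs m ! i"
      using take_xs[of k m] that by (metis m_def max.cobounded1 nth_take)
    also have "\<dots> = xs (Suc i) ! i"
      using take_xs[of "Suc i" m] length_xs[of "Suc i"]
      by (metis m_def max.cobounded2 Suc_le_eq nth_take)
    finally show ?thesis .
  qed
  then show ?thesis by (simp add: nth_equalityI)
qed

lemma inf_run_of_path_chain:
  assumes paths: "\<And>k. \<exists>q'. path T q (xs k) q'"
    and extends: "\<And>k. \<exists>ys. ys \<noteq> [] \<and> xs (Suc k) = xs k @ ys"
  shows "inf_run T q (\<lambda>i. fst (snd (xs (Suc i) ! i))) (\<lambda>i. xs (Suc i) ! i)"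
proof (rule inf_run_if_paths)
  fix m
  obtain q' where "path T q (xs m) q'" using paths ..
  from path_take[OF this] obtain q'' where "path T q (take m (xs m)) q''" ..
  moreover have "m \<le> length (xs m)"
  proof (induction m)
    case (Suc m)
    obtain ys where "ys \<noteq> []" "xs (Suc m) = xs m @ ys" using extends by blast
    with Suc show ?case by (cases ys) auto
  qed simp
  have "take m (xs m) = take m (map (\<lambda>i. xs (Suc i) ! i) [0..<length (xs m)])"
    using list_chain_limit[where xs = xs, OF extends, of m] by (rule arg_cong)
  also have "\<dots> = map (\<lambda>i. xs (Suc i) ! i) [0..<m]"
    using \<open>m \<le> length (xs m)\<close> by (simp add: take_map min_def)
  finally show "\<exists>q'. path T q (map (\<lambda>i. xs (Suc i) ! i) [0..<m]) q'"
    using \<open>path T q (take m (xs m)) q''\<close> by auto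
qed

lemma path_chain_by_extension:
  fixes P :: "nat \<Rightarrow> 'a list \<Rightarrow> bool"
  assumes extend: "\<And>k ts q'. path T q ts q' \<Longrightarrow>
      \<exists>ys q''. ys \<noteq> [] \<and> path T q' ys q'' \<and> P k (labels (ts @ ys))"
  shows "\<exists>xs. (\<forall>k. \<exists>q'. path T q (xs k) q') \<and> (\<forall>k. \<exists>ys. ys \<noteq> [] \<and> xs (Suc k) = xs k @ ys)
    \<and> (\<forall>k. P k (labels (xs (Suc k))))"
proof -
  define good where
    "good k ts ys \<longleftrightarrow> ys \<noteq> [] \<and> (\<exists>q''. path T q (ts @ ys) q'') \<and> P k (labels (ts @ ys))" for k ts ys
  have good_ex: "\<exists>ys. good k ts ys" if ts: "path T q ts q'" for k ts q'
  proof -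
    obtain ys q'' where "ys \<noteq> []" "path T q' ys q''" "P k (labels (ts @ ys))"
      using extend[OF ts] by blast
    moreover from ts \<open>path T q' ys q''\<close> have "path T q (ts @ ys) q''"
      by (auto simp: path_append)
    ultimately show ?thesis unfolding good_def by blast
  qed
  define xs where "xs = rec_nat [] (\<lambda>k ts. ts @ (SOME ys. good k ts ys))"
  have xs_Suc: "xs (Suc k) = xs k @ (SOME ys. good k (xs k) ys)" for k
    by (simp add: xs_def)
  have xs_good: "(\<exists>q'. path T q (xs k) q') \<and> good k (xs k) (SOME ys. good k (xs k) ys)" for k
  proof (induction k)
    case 0
    have "path T q (xs 0) q" by (simp add: xs_def)
    then show ?case using someI_ex[OF good_ex] by blast
  next
    case (Suc k)
    then have "\<exists>q'. path T q (xs (Suc k)) q'" by (simp add: xs_Suc good_def)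
    then show ?case using someI_ex[OF good_ex] by blast
  qed
  then show ?thesis
    by (intro exI[of _ xs]) (auto simp: xs_Suc good_def)
qed

lemma inf_run_by_extension:
  fixes P :: "nat \<Rightarrow> 'a list \<Rightarrow> bool"
  assumes "\<And>k ts q'. path T q ts q' \<Longrightarrow>
      \<exists>ys q''. ys \<noteq> [] \<and> path T q' ys q'' \<and> P k (labels (ts @ ys))"
  shows "\<exists>w r n. inf_run T q w r \<and> strict_mono n \<and> (\<forall>k. P k (prefix w (Suc (n k))))"
proof -
  obtain xs where paths: "\<forall>k. \<exists>q'. path T q (xs k) q'"
    and extends: "\<And>k. \<exists>ys. ys \<noteq> [] \<and> xs (Suc k) = xs k @ ys"
    and P: "\<forall>k. P k (labels (xs (Suc k)))"
    using path_chain_by_extension[where T = T and q = q and P = P, OF assms] by blast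
  define r where "r i = xs (Suc i) ! i" for i
  have run: "inf_run T q (\<lambda>i. fst (snd (r i))) r"
    unfolding r_def using inf_run_of_path_chain[where xs = xs, OF _ extends] paths by blast
  define n where "n k = length (xs (Suc k)) - 1" for k
  have length_xs: "length (xs (Suc k)) = Suc (n k)" for k
    using extends[of k] by (auto simp: n_def)
  have "n k < n (Suc k)" for k
    using extends[of "Suc k"] length_xs[of k] length_xs[of "Suc k"] by (auto simp: neq_Nil_conv)
  then have "strict_mono n" by (simp add: strict_mono_Suc_iff)
  moreover have "P k (prefix (\<lambda>i. fst (snd (r i))) (Suc (n k)))" for k
  proof -
    have "xs (Suc k) = map r [0..<length (xs (Suc k))]"
      unfolding r_def by (rule list_chain_limit[where xs = xs, OF extends])
    then have "xs (Suc k) = map r [0..<Suc (n k)]"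
      by (simp only: length_xs)
    then have "prefix (\<lambda>i. fst (snd (r i))) (Suc (n k)) = labels (xs (Suc k))"
      using inf_run_prefix[OF run, of "Suc (n k)"] by (simp del: upt_Suc)
    then show ?thesis using P by simp
  qed
  ultimately show ?thesis using run by blast
qed

section \<open>Accepting runs of generalised coBuchi automata\<close>

lemma lang_from_eq:
  "well_formed A \<Longrightarrow> lang_from A q = {w. \<exists>r. inf_run (trans A) q w r \<and> accepting A r}"
  by (auto simp: lang_from_def run_from_eq_inf_run dest: inf_run_is_word[OF _ subset_refl])

lemma accepting_shift:
  "gen_coBuchi A C \<Longrightarrow> accepting A (\<lambda>i. r (i + k)) \<longleftrightarrow> accepting A r"
  unfolding accepting_def gen_coBuchi_def
  using finite_shift_iff[of "\<lambda>i. _ \<in> col A (r i)" k] by auto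

lemma accepting_conc: "gen_coBuchi A C \<Longrightarrow> accepting A (conc ts r) \<longleftrightarrow> accepting A r"
  using accepting_shift[of A C "conc ts r" "length ts"] by (simp add: conc_shift)

lemma lang_from_conc:
  assumes A: "gen_coBuchi A C" and "path (trans A) q ts q'" and "w \<in> lang_from A q'"
  shows "conc (labels ts) w \<in> lang_from A q"
proof -
  have wf: "well_formed A" using A by (simp add: gen_coBuchi_def)
  obtain r where "inf_run (trans A) q' w r" "accepting A r"
    using assms(3) by (auto simp: lang_from_eq[OF wf])
  then have "inf_run (trans A) q (conc (labels ts) w) (conc ts r) \<and> accepting A (conc ts r)"
    using inf_run_conc[OF assms(2)] accepting_conc[OF A] by blast
  then show ?thesis by (auto simp: lang_from_eq[OF wf])
qed

lemma lang_from_split: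
  assumes A: "gen_coBuchi A C" and "conc u w \<in> lang_from A q"
  shows "\<exists>ts q'. path (trans A) q ts q' \<and> labels ts = u \<and> w \<in> lang_from A q'"
proof -
  have wf: "well_formed A" using A by (simp add: gen_coBuchi_def)
  obtain r where r: "inf_run (trans A) q (conc u w) r" "accepting A r"
    using assms(2) by (auto simp: lang_from_eq[OF wf])
  have "accepting A (\<lambda>i. r (i + length u))"
    using accepting_shift[OF A] r(2) by blast
  with inf_run_split[OF r(1)] show ?thesis
    by (auto simp: lang_from_eq[OF wf])
qed

lemma lang_from_path_residual:
  assumes A: "gen_coBuchi A C" and sd: "semantically_deterministic A"
  shows "path (trans A) q ts q' \<Longrightarrow> lang_from A q' = residual (lang_from A q) (labels ts)"
proof (induction ts arbitrary: q)
  case Nil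
  then show ?case by simp
next
  case (Cons t ts)
  obtain a p where t: "t = (q, a, p)" and tA: "(q, a, p) \<in> trans A" and ts: "path (trans A) p ts q'"
    using Cons.prems by (cases t) auto
  have "lang_from A p = residual (lang_from A q) [a]"
  proof
    show "lang_from A p \<subseteq> residual (lang_from A q) [a]"
      using lang_from_conc[OF A, of q "[(q, a, p)]" p] tA by (auto simp: residual_def)
  next
    show "residual (lang_from A q) [a] \<subseteq> lang_from A p"
    proof
      fix w assume "w \<in> residual (lang_from A q) [a]"
      then have "conc [a] w \<in> lang_from A q" by (simp add: residual_def)
      then obtain ts' p' where "path (trans A) q ts' p'" "labels ts' = [a]" "w \<in> lang_from A p'"
        using lang_from_split[OF A] by blast
      moreover from this have "(q, a, p') \<in> trans A"
        by (cases ts' rule: list.exhaust) auto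
      with tA sd have "lang_from A p = lang_from A p'"
        unfolding semantically_deterministic_def equivalent_states_def by blast
      ultimately show "w \<in> lang_from A p" by simp
    qed
  qed
  with Cons.IH[OF ts] t show ?case by (simp add: residual_append)
qed

lemma run_lang_subset_lang_from:
  assumes A: "gen_coBuchi A C" and "c \<in> C" and "T \<subseteq> trans A" and "\<forall>t\<in>T. c \<notin> col A t"
  shows "run_lang T q \<subseteq> lang_from A q"
proof
  fix w assume "w \<in> run_lang T q"
  then obtain r where r: "inf_run T q w r" by (auto simp: run_lang_def)
  then have "{i. c \<in> col A (r i)} = {}"
    using assms(4) by (auto simp: inf_run_def)
  then have "finite {i. c \<in> col A (r i)}" by simp
  then have "accepting A r"
    using A \<open>c \<in> C\<close> unfolding accepting_def gen_coBuchi_def by blast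
  with inf_run_mono[OF r assms(3)] A show "w \<in> lang_from A q"
    by (auto simp: lang_from_eq gen_coBuchi_def)
qed

section \<open>Resolvers\<close>

definition resolver_state ::
    "('q, 'a, 'g) automaton \<Rightarrow> ('a list \<Rightarrow> 'q \<times> 'a \<times> 'q) \<Rightarrow> 'a list \<Rightarrow> 'q" where
  "resolver_state A \<sigma> u = (if u = [] then init A else snd (snd (\<sigma> u)))"

lemma resolver_run:
  "resolver A \<sigma> \<Longrightarrow> is_word (alph A) w \<Longrightarrow> inf_run (trans A) (init A) w (\<lambda>i. \<sigma> (prefix w (Suc i)))"
  by (simp add: resolver_def run_from_eq_inf_run)

lemma resolver_accepting:
  "resolver A \<sigma> \<Longrightarrow> w \<in> lang A \<Longrightarrow> accepting A (\<lambda>i. \<sigma> (prefix w (Suc i)))"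
  by (simp add: resolver_def lang_def lang_from_def)

lemma resolver_finite_colour:
  assumes "gen_coBuchi A C" "resolver A \<sigma>" "w \<in> lang A"
  obtains c where "c \<in> C" "finite {i. c \<in> col A (\<sigma> (prefix w (Suc i)))}"
  using resolver_accepting[OF assms(2,3)] assms(1) that
  by (auto simp: accepting_def gen_coBuchi_def)

lemma resolver_source:
  assumes "resolver A \<sigma>" "is_word (alph A) w"
  shows "fst (\<sigma> (prefix w (Suc n))) = resolver_state A \<sigma> (prefix w n)"
proof (cases n)
  case 0
  then show ?thesis using resolver_run[OF assms] by (simp add: inf_run_def resolver_state_def)
next
  case (Suc m)
  have "snd (snd (\<sigma> (prefix w (Suc m)))) = fst (\<sigma> (prefix w (Suc (Suc m))))"
    using resolver_run[OF assms] by (simp add: inf_run_def)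
  then show ?thesis using Suc by (simp add: resolver_state_def prefix_Suc)
qed

lemma resolver_trans:
  assumes \<sigma>: "resolver A \<sigma>" and "set u \<subseteq> alph A" and "a \<in> alph A"
  shows "\<sigma> (u @ [a]) \<in> trans A \<and>
    \<sigma> (u @ [a]) = (resolver_state A \<sigma> u, a, resolver_state A \<sigma> (u @ [a]))"
proof -
  define w where "w = conc (u @ [a]) (\<lambda>_. a)"
  have w: "is_word (alph A) w"
    using assms(2,3) by (simp add: w_def is_word_conc) (simp add: is_word_def)
  have prefix_w: "prefix w (length u) = u" "prefix w (Suc (length u)) = u @ [a]"
    using prefix_conc[of _ "u @ [a]" "\<lambda>_. a"] by (simp_all add: w_def)
  have "w (length u) = a" by (simp add: w_def conc_def)
  moreover have "\<sigma> (prefix w (Suc i)) \<in> trans A \<and> fst (snd (\<sigma> (prefix w (Suc i)))) = w i" for i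
    using resolver_run[OF \<sigma> w] by (simp add: inf_run_def)
  ultimately have "\<sigma> (u @ [a]) \<in> trans A" "fst (snd (\<sigma> (u @ [a]))) = a"
    using prefix_w(2) by metis+
  moreover have "fst (\<sigma> (u @ [a])) = resolver_state A \<sigma> u"
    using resolver_source[OF \<sigma> w, of "length u"] prefix_w by simp
  ultimately show ?thesis
    by (cases "\<sigma> (u @ [a])") (simp add: resolver_state_def)
qed

lemma path_to_resolver_state:
  assumes \<sigma>: "resolver A \<sigma>"
  shows "set u \<subseteq> alph A \<Longrightarrow> \<exists>ts. path (trans A) (init A) ts (resolver_state A \<sigma> u) \<and> labels ts = u"
proof (induction u rule: rev_induct)
  case Nil
  have "path (trans A) (init A) [] (resolver_state A \<sigma> [])" by (simp add: resolver_state_def)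
  then show ?case by (metis labels_simps(1))
next
  case (snoc a u)
  then obtain ts where "path (trans A) (init A) ts (resolver_state A \<sigma> u)" "labels ts = u" by auto
  with resolver_trans[OF \<sigma>, of u a] snoc.prems
  have "path (trans A) (init A) (ts @ [\<sigma> (u @ [a])]) (resolver_state A \<sigma> (u @ [a]))
    \<and> labels (ts @ [\<sigma> (u @ [a])]) = u @ [a]"
    by (auto simp: path_snoc)
  then show ?case by blast
qed

lemma resolver_state_in_states:
  "well_formed A \<Longrightarrow> resolver A \<sigma> \<Longrightarrow> set u \<subseteq> alph A \<Longrightarrow> resolver_state A \<sigma> u \<in> states A"
  using path_to_resolver_state[of A \<sigma> u] path_target_in_states[of A "init A"]
  unfolding well_formed_def by blast

lemma lang_from_resolver_state:
  assumes A: "gen_coBuchi A C" and \<sigma>: "resolver A \<sigma>" and u: "set u \<subseteq> alph A"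
  shows "lang_from A (resolver_state A \<sigma> u) = residual (lang A) u"
proof
  obtain ts where "path (trans A) (init A) ts (resolver_state A \<sigma> u)" "labels ts = u"
    using path_to_resolver_state[OF \<sigma> u] by blast
  then show "lang_from A (resolver_state A \<sigma> u) \<subseteq> residual (lang A) u"
    using lang_from_conc[OF A] unfolding residual_def lang_def by blast
next
  have wf: "well_formed A" using A by (simp add: gen_coBuchi_def)
  show "residual (lang A) u \<subseteq> lang_from A (resolver_state A \<sigma> u)"
  proof
    fix w assume "w \<in> residual (lang A) u"
    then have uw: "conc u w \<in> lang A" by (simp add: residual_def)
    then have word: "is_word (alph A) (conc u w)" by (simp add: lang_def lang_from_def)
    let ?r = "\<lambda>i. \<sigma> (prefix (conc u w) (Suc i))"
    have "fst (?r (length u)) = resolver_state A \<sigma> u"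
      using resolver_source[OF \<sigma> word, of "length u"] prefix_conc[of "length u" u w] by simp
    moreover have "inf_run (trans A) (fst (?r (length u))) w (\<lambda>i. ?r (i + length u))"
      using inf_run_split[OF resolver_run[OF \<sigma> word]] by (rule conjunct2[THEN conjunct2])
    moreover have "accepting A (\<lambda>i. ?r (i + length u))"
      using accepting_shift[OF A, of ?r] resolver_accepting[OF \<sigma> uw] by simp
    ultimately show "w \<in> lang_from A (resolver_state A \<sigma> u)"
      by (auto simp: lang_from_eq[OF wf])
  qed
qed

section \<open>Safe components of coBuchi automata\<close>

lemma safe_trans_subset: "safe_trans A \<subseteq> trans A"
  by (auto simp: safe_trans_def)

lemma safe_lang_eq_run_lang:
  assumes "well_formed A"
  shows "safe_lang A q = run_lang (safe_trans A) q"
  unfolding safe_lang_def run_lang_def inf_run_def[symmetric]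
  using inf_run_is_word[OF assms safe_trans_subset] by auto

lemma safe_deterministic_iff: "safe_deterministic A \<longleftrightarrow> deterministic (safe_trans A)"
  by (simp add: safe_deterministic_def deterministic_def)

lemma safe_trans_colour:
  assumes "coBuchi A" "t \<in> safe_trans A"
  shows "1 \<notin> col A t"
proof -
  have "t \<in> trans A" "col A t \<noteq> {1}"
    using assms(2) by (auto simp: safe_trans_def coBuchi_trans_def)
  moreover from this(1) have "col A t \<subseteq> {1}"
    using assms(1) by (auto simp: coBuchi_def gen_coBuchi_def)
  ultimately show ?thesis by auto
qed

lemma safe_lang_subset_lang_from:
  assumes "coBuchi A"
  shows "safe_lang A q \<subseteq> lang_from A q"
proof -
  have "gen_coBuchi A {1}" "well_formed A"
    using assms by (simp_all add: coBuchi_def gen_coBuchi_def)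
  moreover have "\<forall>t\<in>safe_trans A. 1 \<notin> col A t"
    using safe_trans_colour[OF assms] by blast
  ultimately show ?thesis
    using run_lang_subset_lang_from[of A "{1}" 1 "safe_trans A" q] safe_trans_subset[of A]
    by (simp add: safe_lang_eq_run_lang)
qed

lemma resolver_safe_run:
  assumes \<sigma>: "resolver A \<sigma>" and u: "set u \<subseteq> alph A" and w: "is_word (alph A) w"
    and safe: "\<And>i. \<sigma> (u @ prefix w (Suc i)) \<notin> coBuchi_trans A"
  shows "w \<in> safe_lang A (resolver_state A \<sigma> u)"
proof -
  define r where "r i = \<sigma> (u @ prefix w (Suc i))" for i
  have "r i = (resolver_state A \<sigma> (u @ prefix w i), w i, resolver_state A \<sigma> (u @ prefix w (Suc i)))
    \<and> r i \<in> safe_trans A" for i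
  proof -
    have "set (u @ prefix w i) \<subseteq> alph A" "w i \<in> alph A"
      using u set_prefix[OF w] w by (auto simp: is_word_def)
    from resolver_trans[OF \<sigma> this] safe[of i] show ?thesis
      by (auto simp: r_def prefix_Suc safe_trans_def)
  qed
  then have "inf_run (safe_trans A) (resolver_state A \<sigma> u) w r"
    unfolding inf_run_def by (metis prod.sel prefix_0 append_Nil2)
  with w show ?thesis
    unfolding safe_lang_def inf_run_def[symmetric] by blast
qed

lemma safe_component_of_self: "p \<in> states A \<Longrightarrow> p \<in> safe_component_of A p"
  by (simp add: safe_component_of_def safe_reach_def)

lemma safe_components_subset: "S \<in> safe_components A \<Longrightarrow> S \<subseteq> states A"
  by (auto simp: safe_components_def safe_component_of_def)

lemma safe_component_of_eq:
  assumes "S \<in> safe_components A" and "p \<in> S"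
  shows "safe_component_of A p = S"
proof -
  obtain s where s: "S = safe_component_of A s"
    using assms(1) by (auto simp: safe_components_def)
  with assms(2) have "(s, p) \<in> safe_reach A" "(p, s) \<in> safe_reach A"
    by (auto simp: safe_component_of_def)
  then show ?thesis
    unfolding s safe_component_of_def safe_reach_def by (meson rtrancl_trans)
qed

lemma safe_trans_in_component:
  assumes "well_formed A" "normal_form A" "S \<in> safe_components A"
    and "(p, a, p') \<in> safe_trans A" "p \<in> S"
  shows "p' \<in> S"
proof -
  have "p' \<in> states A"
    using assms(1,4) safe_trans_subset by (auto simp: well_formed_def)
  moreover have "safe_component_of A p' = safe_component_of A p"
    using assms(2,4) by (auto simp: normal_form_def safe_trans_def)
  ultimately show ?thesis
    using safe_component_of_self safe_component_of_eq[OF assms(3,5)] by metis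
qed

lemma safe_path_in_component:
  assumes "well_formed A" "normal_form A" "S \<in> safe_components A"
  shows "path (safe_trans A) p ts p' \<Longrightarrow> p \<in> S \<Longrightarrow> p' \<in> S"
proof (induction ts arbitrary: p)
  case (Cons t ts)
  then show ?case
    using safe_trans_in_component[OF assms, of p "fst (snd t)" "snd (snd t)"] by (cases t) auto
qed simp

lemma safe_component_connected:
  assumes "S \<in> safe_components A" "p \<in> S" "p' \<in> S"
  shows "\<exists>ts. path (safe_trans A) p ts p'"
proof -
  have "(p, p') \<in> safe_reach A"
    using assms safe_component_of_eq by (fastforce simp: safe_component_of_def)
  then show ?thesis by (simp add: safe_reach_def path_if_rtrancl)
qed

lemma safe_component_singleton:
  assumes "well_formed A" "normal_form A" "S \<in> safe_components A" "p \<in> S"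
    and no_succ: "\<nexists>a p'. (p, a, p') \<in> safe_trans A \<and> p' \<in> S"
  shows "S = {p}"
proof -
  have "p' = p" if p': "p' \<in> S" for p'
  proof -
    obtain ts where ts: "path (safe_trans A) p ts p'"
      using safe_component_connected[OF assms(3,4) p'] ..
    show ?thesis
    proof (cases ts)
      case (Cons t ts')
      with ts have "(p, fst (snd t), snd (snd t)) \<in> safe_trans A"
        by (cases t) auto
      with no_succ safe_trans_in_component[OF assms(1-3) _ assms(4)] show ?thesis by blast
    qed (use ts in simp)
  qed
  with assms(4) show ?thesis by blast
qed

lemma safe_lang_nonempty:
  assumes "well_formed A" "normal_form A" "S \<in> safe_components A"
    and succ: "\<forall>p\<in>S. \<exists>a p'. (p, a, p') \<in> safe_trans A \<and> p' \<in> S" and "p \<in> S"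
  shows "safe_lang A p \<noteq> {}"
proof -
  have "\<exists>ys q''. ys \<noteq> [] \<and> path (safe_trans A) q' ys q'' \<and> True"
    if "path (safe_trans A) p ts q'" for ts q'
  proof -
    have "q' \<in> S" using safe_path_in_component[OF assms(1-3) that \<open>p \<in> S\<close>] .
    then obtain a q'' where "(q', a, q'') \<in> safe_trans A" using succ by blast
    then have "path (safe_trans A) q' [(q', a, q'')] q''" by simp
    then show ?thesis by blast
  qed
  then obtain w r where "inf_run (safe_trans A) p w r"
    using inf_run_by_extension[where T = "safe_trans A" and q = p and P = "\<lambda>_ _. True"] by blast
  then show ?thesis
    by (auto simp: safe_lang_eq_run_lang[OF assms(1)] run_lang_def)
qed

section \<open>Counting states by residuals\<close>

lemma sum_max_residual_le_card:
  assumes finB: "finite (states B)" and "finite \<S>" "\<S> \<noteq> {}"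
    and inj: "\<And>S. S \<in> \<S> \<Longrightarrow>
      \<exists>b. inj_on b S \<and> (\<forall>p\<in>S. b p \<in> states B \<and> lang_from B (b p) = lang_from A p)"
  shows "(\<Sum>R\<in>\<R>. Max {card (S \<inter> states_of_residual A R) | S. S \<in> \<S>}) \<le> card (states B)"
proof (cases "finite \<R>")
  case True
  have "card (S \<inter> states_of_residual A R) \<le> card (states_of_residual B R)" if S: "S \<in> \<S>" for S R
  proof -
    obtain b where b: "inj_on b S" "\<forall>p\<in>S. b p \<in> states B \<and> lang_from B (b p) = lang_from A p"
      using inj[OF S] by blast
    have "inj_on b (S \<inter> states_of_residual A R)"
      using b(1) by (rule inj_on_subset) blast
    moreover have "b ` (S \<inter> states_of_residual A R) \<subseteq> states_of_residual B R"
      using b(2) by (auto simp: states_of_residual_def)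
    ultimately show ?thesis
      using finB by (intro card_inj_on_le) (auto simp: states_of_residual_def)
  qed
  then have "Max {card (S \<inter> states_of_residual A R) | S. S \<in> \<S>} \<le> card (states_of_residual B R)"
    for R
    using assms(2,3) by (subst Max_le_iff) auto
  then have "(\<Sum>R\<in>\<R>. Max {card (S \<inter> states_of_residual A R) | S. S \<in> \<S>})
      \<le> (\<Sum>R\<in>\<R>. card (states_of_residual B R))"
    by (rule sum_mono)
  also have "\<dots> = card (\<Union>R\<in>\<R>. states_of_residual B R)"
    using True finB by (subst card_UN_disjoint) (auto simp: states_of_residual_def)
  also have "\<dots> \<le> card (states B)"
    using finB by (intro card_mono) (auto simp: states_of_residual_def)
  finally show ?thesis .
qed simp

section \<open>Embedding the safe components of a minimal automaton\<close>

locale hd_coBuchi_pair =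
  fixes B :: "('p, 'a, 'c set) automaton" and C :: "'c set"
    and A :: "('q, 'a, nat set) automaton"
    and L :: "(nat \<Rightarrow> 'a) set" and \<Sigma> :: "'a set"
    and \<sigma>B :: "'a list \<Rightarrow> 'p \<times> 'a \<times> 'p" and \<sigma>A :: "'a list \<Rightarrow> 'q \<times> 'a \<times> 'q"
  assumes B: "gen_coBuchi B C" and \<sigma>B: "resolver B \<sigma>B"
    and alph_B: "alph B = \<Sigma>" and lang_B: "lang B = L"
    and A: "coBuchi A" and \<sigma>A: "resolver A \<sigma>A"
    and alph_A: "alph A = \<Sigma>" and lang_A: "lang A = L"
    and nice_A: "nice A" and safe_minimal_A: "safe_minimal A"
    and safe_centralised_A: "safe_centralised A"
begin

lemma gen_coBuchi_A: "gen_coBuchi A {1}"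
  using A by (simp add: coBuchi_def)

lemma well_formed_A: "well_formed A"
  using gen_coBuchi_A by (simp add: gen_coBuchi_def)

lemma well_formed_B: "well_formed B"
  using B by (simp add: gen_coBuchi_def)

lemma normal_form_A: "normal_form A"
  using nice_A by (simp add: nice_def)

lemma deterministic_safe_trans_A: "deterministic (safe_trans A)"
  using nice_A by (simp add: nice_def safe_deterministic_iff)

lemma path_labels_A: "path (trans A) q ts q' \<Longrightarrow> set (labels ts) \<subseteq> \<Sigma>"
  using path_labels_in_alph[OF well_formed_A] alph_A by blast

lemma safe_path_labels_A: "path (safe_trans A) q ts q' \<Longrightarrow> set (labels ts) \<subseteq> \<Sigma>"
  using path_labels_A path_mono[OF _ safe_trans_subset[of A]] by blast

lemma path_from_init_A: "q \<in> states A \<Longrightarrow> \<exists>ts. path (trans A) (init A) ts q"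
  using nice_A path_if_rtrancl by (fastforce simp: nice_def all_reachable_def)

lemma lang_from_path_from_init_A:
  "path (trans A) (init A) ts q \<Longrightarrow> lang_from A q = residual L (labels ts)"
  using lang_from_path_residual[OF gen_coBuchi_A] nice_A lang_A
  by (simp add: nice_def lang_def)

lemma lang_from_resolver_state_A:
  "set u \<subseteq> \<Sigma> \<Longrightarrow> lang_from A (resolver_state A \<sigma>A u) = residual L u"
  using lang_from_resolver_state[OF gen_coBuchi_A \<sigma>A] alph_A lang_A by simp

lemma lang_from_resolver_state_B:
  "set u \<subseteq> \<Sigma> \<Longrightarrow> lang_from B (resolver_state B \<sigma>B u) = residual L u"
  using lang_from_resolver_state[OF B \<sigma>B] alph_B lang_B by simp

lemma colours_nonempty: "w \<in> L \<Longrightarrow> C \<noteq> {}"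
  using B lang_B by (auto simp: lang_def lang_from_def accepting_def gen_coBuchi_def)

lemma resolver_B_misses_a_colour:
  fixes n :: "nat \<Rightarrow> nat"
  assumes "conc u w \<in> L" "strict_mono n" "\<forall>c\<in>C. infinite {k. colour k = c}"
    and hits: "\<forall>k. colour k \<in> col B (\<sigma>B (u @ prefix w (Suc (n k))))"
  shows False
proof -
  obtain c where "c \<in> C" and fin: "finite {i. c \<in> col B (\<sigma>B (prefix (conc u w) (Suc i)))}"
    using resolver_finite_colour[OF B \<sigma>B] assms(1) lang_B by blast
  have "\<forall>k\<in>{k. colour k = c}. c \<in> col B (\<sigma>B (u @ prefix w (Suc (n k))))"
    using hits by auto
  then have "infinite {i. c \<in> col B (\<sigma>B (prefix (conc u w) (Suc i)))}"
    by (rule infinite_positions_conc[OF assms(2) assms(3)[rule_format, OF \<open>c \<in> C\<close>]])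
  with fin show False by contradiction
qed

lemma safe_word_in_L:
  assumes "path (trans A) (init A) ts q" "w \<in> safe_lang A q"
  shows "conc (labels ts) w \<in> L"
  using assms lang_from_conc[OF gen_coBuchi_A] safe_lang_subset_lang_from[OF A] lang_A
  unfolding lang_def by blast

end

locale hd_component = hd_coBuchi_pair +
  fixes S :: "'q set"
  assumes S: "S \<in> safe_components A"
begin

lemma S_subset: "S \<subseteq> states A"
  using S by (rule safe_components_subset)

lemma safe_path_in_S: "path (safe_trans A) p ts p' \<Longrightarrow> p \<in> S \<Longrightarrow> p' \<in> S"
  using safe_path_in_component[OF well_formed_A normal_form_A S] .

lemma colour_free_region_exists:
  assumes succ: "\<forall>p\<in>S. \<exists>a p'. (p, a, p') \<in> safe_trans A \<and> p' \<in> S" and "S \<noteq> {}"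
  shows "\<exists>h p0 c. p0 \<in> S \<and> (\<exists>ts. path (trans A) (init A) ts p0 \<and> labels ts = h) \<and> c \<in> C \<and>
    (\<forall>ts p. path (safe_trans A) p0 ts p \<longrightarrow> ts \<noteq> [] \<longrightarrow> c \<notin> col B (\<sigma>B (h @ labels ts)))"
proof (rule ccontr)
  assume "\<not> ?thesis"
  then have hit: "\<exists>ys p. ys \<noteq> [] \<and> path (safe_trans A) p0 ys p \<and>
      c \<in> col B (\<sigma>B (labels ts @ labels ys))"
    if "p0 \<in> S" "path (trans A) (init A) ts p0" "c \<in> C" for ts p0 c
    using that by blast
  obtain s0 where s0: "s0 \<in> S" using \<open>S \<noteq> {}\<close> by blast
  obtain ts0 where ts0: "path (trans A) (init A) ts0 s0"
    using path_from_init_A S_subset s0 by blast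
  obtain w0 where "w0 \<in> safe_lang A s0"
    using safe_lang_nonempty[OF well_formed_A normal_form_A S succ s0] by blast
  then have "C \<noteq> {}"
    using colours_nonempty safe_word_in_L[OF ts0] by blast
  moreover have "finite C" using B by (simp add: gen_coBuchi_def)
  ultimately obtain colour where colour: "\<forall>k::nat. colour k \<in> C"
    and often: "\<forall>c\<in>C. infinite {k. colour k = c}"
    using ex_fair_enumeration[of C] by blast
  \<comment> \<open>a safe run from \<open>s0\<close> along which \<open>\<sigma>B\<close> meets every colour infinitely often\<close>
  have "\<exists>ys q''. ys \<noteq> [] \<and> path (safe_trans A) q' ys q'' \<and>
      colour k \<in> col B (\<sigma>B (labels ts0 @ labels (ts @ ys)))"
    if ts: "path (safe_trans A) s0 ts q'" for k ts q'
  proof -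
    have "path (trans A) (init A) (ts0 @ ts) q'"
      using ts0 path_mono[OF ts safe_trans_subset] by (auto simp: path_append)
    from hit[OF safe_path_in_S[OF ts s0] this colour[rule_format]] show ?thesis by simp
  qed
  then obtain w r n where run: "inf_run (safe_trans A) s0 w r" and "strict_mono n"
    and hits: "\<forall>k. colour k \<in> col B (\<sigma>B (labels ts0 @ prefix w (Suc (n k))))"
    using inf_run_by_extension[where T = "safe_trans A" and q = s0
        and P = "\<lambda>k u. colour k \<in> col B (\<sigma>B (labels ts0 @ u))"] by blast
  have "w \<in> safe_lang A s0"
    using run by (auto simp: safe_lang_eq_run_lang[OF well_formed_A] run_lang_def)
  then have "conc (labels ts0) w \<in> L"
    by (rule safe_word_in_L[OF ts0])
  from resolver_B_misses_a_colour[OF this \<open>strict_mono n\<close> often hits] show False .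
qed

end

locale colour_free_region = hd_component +
  fixes h p0 c
  assumes succ: "\<forall>p\<in>S. \<exists>a p'. (p, a, p') \<in> safe_trans A \<and> p' \<in> S"
    and p0: "p0 \<in> S" and h: "\<exists>ts. path (trans A) (init A) ts p0 \<and> labels ts = h"
    and c: "c \<in> C"
    and c_free: "\<And>ts p. path (safe_trans A) p0 ts p \<Longrightarrow> ts \<noteq> [] \<Longrightarrow> c \<notin> col B (\<sigma>B (h @ labels ts))"
begin

definition B_state where
  "B_state u = resolver_state B \<sigma>B (h @ u)"

definition shadow_trans where
  "shadow_trans = {\<sigma>B (h @ labels ts) | ts p. path (safe_trans A) p0 ts p \<and> ts \<noteq> []}"

abbreviation shadow_lang where
  "shadow_lang \<equiv> run_lang shadow_trans"

definition covered where
  "covered q \<longleftrightarrow> (\<exists>g\<in>states A. lang_from A g = lang_from B q \<and> shadow_lang q \<subseteq> safe_lang A g)"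

lemma h_in_\<Sigma>: "set h \<subseteq> \<Sigma>"
  using h path_labels_A by blast

lemma lang_from_B_state: "set u \<subseteq> \<Sigma> \<Longrightarrow> lang_from B (B_state u) = residual L (h @ u)"
  using lang_from_resolver_state_B h_in_\<Sigma> by (simp add: B_state_def)

lemma lang_from_safe_path:
  assumes "path (safe_trans A) p0 ts p"
  shows "lang_from A p = residual L (h @ labels ts)"
proof -
  obtain ts0 where "path (trans A) (init A) ts0 p0" "labels ts0 = h" using h by blast
  then have "path (trans A) (init A) (ts0 @ ts) p"
    using path_mono[OF assms safe_trans_subset] by (auto simp: path_append)
  with \<open>labels ts0 = h\<close> show ?thesis by (simp add: lang_from_path_from_init_A)
qed

lemma shadow_trans_snoc:
  assumes "path (safe_trans A) p0 (ts @ [t]) p"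
  shows "\<sigma>B (h @ labels (ts @ [t])) =
      (B_state (labels ts), fst (snd t), B_state (labels ts @ [fst (snd t)]))
    \<and> \<sigma>B (h @ labels (ts @ [t])) \<in> shadow_trans \<inter> trans B"
proof -
  have "set (h @ labels (ts @ [t])) \<subseteq> \<Sigma>"
    using h_in_\<Sigma> safe_path_labels_A[OF assms] by simp
  then have "set (h @ labels ts) \<subseteq> alph B" "fst (snd t) \<in> alph B"
    using alph_B by auto
  note step = resolver_trans[OF \<sigma>B this]
  have "\<sigma>B (h @ labels (ts @ [t])) \<in> shadow_trans"
    using assms unfolding shadow_trans_def by blast
  with step show ?thesis
    unfolding B_state_def by (metis IntI append_assoc labels_simps(2,3) labels_simps(1))
qed

lemma shadow_trans_cases:
  assumes "t \<in> shadow_trans"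
  obtains ts t' p where "path (safe_trans A) p0 (ts @ [t']) p"
    and "t = (B_state (labels ts), fst (snd t'), B_state (labels ts @ [fst (snd t')]))"
    and "t \<in> trans B"
proof -
  obtain ts p where "t = \<sigma>B (h @ labels ts)" "path (safe_trans A) p0 ts p" "ts \<noteq> []"
    using assms unfolding shadow_trans_def by blast
  moreover from \<open>ts \<noteq> []\<close> obtain ts' t' where "ts = ts' @ [t']"
    by (metis rev_exhaust)
  ultimately show thesis
    using that shadow_trans_snoc by blast
qed

lemma shadow_trans_subset: "shadow_trans \<subseteq> trans B"
  using shadow_trans_cases by blast

lemma shadow_trans_lang:
  assumes "(q, a, q') \<in> shadow_trans"
  shows "lang_from B q' = residual (lang_from B q) [a]"
proof -
  obtain ts t p where "path (safe_trans A) p0 (ts @ [t]) p"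
    and t: "(q, a, q') = (B_state (labels ts), fst (snd t), B_state (labels ts @ [fst (snd t)]))"
    using shadow_trans_cases[OF assms] by metis
  then have "set (labels ts @ [a]) \<subseteq> \<Sigma>"
    using safe_path_labels_A by fastforce
  with t show ?thesis
    by (simp add: lang_from_B_state residual_append)
qed

lemma shadow_path_lang:
  "path shadow_trans q es q' \<Longrightarrow> lang_from B q' = residual (lang_from B q) (labels es)"
proof (induction es arbitrary: q)
  case (Cons e es)
  then have "e \<in> shadow_trans" "fst e = q" and es: "path shadow_trans (snd (snd e)) es q'"
    by simp_all
  then have "lang_from B (snd (snd e)) = residual (lang_from B q) [fst (snd e)]"
    using shadow_trans_lang by (cases e) simp
  with Cons.IH[OF es] show ?case by (simp add: residual_append)
qed simp

lemma shadow_lang_subset_lang_from: "shadow_lang q \<subseteq> lang_from B q"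
proof -
  have "\<forall>t\<in>shadow_trans. c \<notin> col B t"
    using c_free unfolding shadow_trans_def by blast
  then show ?thesis
    using run_lang_subset_lang_from[OF B c shadow_trans_subset] by blast
qed

lemma safe_lang_subset_shadow_lang:
  assumes ts: "path (safe_trans A) p0 ts p"
  shows "safe_lang A p \<subseteq> shadow_lang (B_state (labels ts))"
proof
  fix w assume "w \<in> safe_lang A p"
  then obtain r where r: "inf_run (safe_trans A) p w r"
    by (auto simp: safe_lang_eq_run_lang[OF well_formed_A] run_lang_def)
  define r' where "r' i = \<sigma>B (h @ labels ts @ prefix w (Suc i))" for i
  have "r' i = (B_state (labels ts @ prefix w i), w i, B_state (labels ts @ prefix w (Suc i)))
    \<and> r' i \<in> shadow_trans" for i
  proof -
    have "path (safe_trans A) p0 ((ts @ map r [0..<i]) @ [r i]) (fst (r (Suc i)))"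
      using ts inf_run_prefix[OF r, of "Suc i"] by (auto simp: path_append)
    note step = shadow_trans_snoc[OF this]
    have "labels (ts @ map r [0..<i]) = labels ts @ prefix w i" "fst (snd (r i)) = w i"
      using inf_run_prefix[OF r, of i] r by (auto simp: inf_run_def)
    then have "h @ labels ((ts @ map r [0..<i]) @ [r i]) = h @ labels ts @ prefix w (Suc i)"
      by (simp add: prefix_Suc)
    with step \<open>labels (ts @ map r [0..<i]) = _\<close> \<open>fst (snd (r i)) = w i\<close> show ?thesis
      unfolding r'_def by (clarsimp simp: prefix_Suc)
  qed
  then have "inf_run shadow_trans (B_state (labels ts)) w r'"
    unfolding inf_run_def by (metis prod.sel prefix_0 append_Nil2)
  then show "w \<in> shadow_lang (B_state (labels ts))"
    by (auto simp: run_lang_def)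
qed

lemma shadow_path_labels: "path shadow_trans q es q' \<Longrightarrow> set (labels es) \<subseteq> \<Sigma>"
  using path_labels_in_alph[OF well_formed_B path_mono[OF _ shadow_trans_subset]] alph_B by blast

text \<open>Otherwise one could build a shadow run, accepted by \<open>B\<close> because it avoids \<open>c\<close>, along which
  the resolver of \<open>A\<close> takes infinitely many coBuchi transitions.\<close>
lemma resolver_A_eventually_safe:
  "\<exists>es q. path shadow_trans (B_state []) es q \<and>
    (\<forall>es' q'. path shadow_trans q es' q' \<longrightarrow> es' \<noteq> [] \<longrightarrow> \<sigma>A (h @ labels (es @ es')) \<notin> coBuchi_trans A)"
proof (rule ccontr)
  assume "\<not> ?thesis"
  then have extend: "\<And>(k::nat) es q'. path shadow_trans (B_state []) es q' \<Longrightarrow>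
      \<exists>ys q''. ys \<noteq> [] \<and> path shadow_trans q' ys q'' \<and> \<sigma>A (h @ labels (es @ ys)) \<in> coBuchi_trans A"
    by blast
  obtain w r and n :: "nat \<Rightarrow> nat"
    where run: "inf_run shadow_trans (B_state []) w r" and "strict_mono n"
    and hits: "\<forall>k. \<sigma>A (h @ prefix w (Suc (n k))) \<in> coBuchi_trans A"
    using inf_run_by_extension[OF extend] by blast
  define W where "W = conc h w"
  have "w \<in> lang_from B (B_state [])"
    using run shadow_lang_subset_lang_from by (auto simp: run_lang_def)
  then have "W \<in> lang A"
    using lang_from_B_state[of "[]"] lang_A by (simp add: W_def residual_def)
  then have "accepting A (\<lambda>i. \<sigma>A (prefix W (Suc i)))"
    by (rule resolver_accepting[OF \<sigma>A])
  then have "finite {i. 1 \<in> col A (\<sigma>A (prefix W (Suc i)))}"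
    using gen_coBuchi_A by (simp add: accepting_def gen_coBuchi_def)
  moreover have "infinite {i. 1 \<in> col A (\<sigma>A (prefix W (Suc i)))}"
    unfolding W_def using hits
    by (intro infinite_positions_conc[OF \<open>strict_mono n\<close> infinite_UNIV_nat])
      (simp add: coBuchi_trans_def)
  ultimately show False by contradiction
qed

lemma shadow_path_target:
  assumes "path shadow_trans (B_state []) es q"
  shows "\<exists>ts p. path (safe_trans A) p0 ts p \<and> q = B_state (labels ts)"
proof (cases es rule: rev_exhaust)
  case Nil
  then have "path (safe_trans A) p0 [] p0" "q = B_state (labels [])"
    using assms by simp_all
  then show ?thesis by blast
next
  case (snoc es' e)
  then have "e \<in> shadow_trans" "q = snd (snd e)"
    using assms by (simp_all add: path_snoc)
  then obtain ts t p where "path (safe_trans A) p0 (ts @ [t]) p"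
    and "e = (B_state (labels ts), fst (snd t), B_state (labels ts @ [fst (snd t)]))"
    by (auto elim: shadow_trans_cases)
  with \<open>q = snd (snd e)\<close> have "q = B_state (labels (ts @ [t]))" by simp
  with \<open>path (safe_trans A) p0 (ts @ [t]) p\<close> show ?thesis by blast
qed

lemma shadow_lang_subset_resolver_safe_lang:
  assumes u: "set u \<subseteq> \<Sigma>"
    and safe: "\<forall>es q'. path shadow_trans q es q' \<longrightarrow> es \<noteq> [] \<longrightarrow> \<sigma>A (u @ labels es) \<notin> coBuchi_trans A"
  shows "shadow_lang q \<subseteq> safe_lang A (resolver_state A \<sigma>A u)"
proof
  fix w assume "w \<in> shadow_lang q"
  then obtain r where r: "inf_run shadow_trans q w r" by (auto simp: run_lang_def)
  have "\<sigma>A (u @ prefix w (Suc i)) \<notin> coBuchi_trans A" for i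
  proof -
    have "path shadow_trans q (map r [0..<Suc i]) (fst (r (Suc i)))"
      and labels: "labels (map r [0..<Suc i]) = prefix w (Suc i)"
      using inf_run_prefix[OF r, of "Suc i"] by blast+
    moreover have "map r [0..<Suc i] \<noteq> []" by simp
    ultimately show ?thesis
      using safe by (metis labels)
  qed
  moreover have "is_word (alph A) w"
    using inf_run_is_word[OF well_formed_B shadow_trans_subset r] alph_A alph_B by simp
  ultimately show "w \<in> safe_lang A (resolver_state A \<sigma>A u)"
    using resolver_safe_run[OF \<sigma>A] u alph_A by simp
qed

lemma covered_exists: "\<exists>ts p. path (safe_trans A) p0 ts p \<and> covered (B_state (labels ts))"
proof -
  obtain es q where es: "path shadow_trans (B_state []) es q"
    and safe: "\<forall>es' q'. path shadow_trans q es' q' \<longrightarrow> es' \<noteq> [] \<longrightarrow>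
      \<sigma>A (h @ labels (es @ es')) \<notin> coBuchi_trans A"
    using resolver_A_eventually_safe by blast
  define g where "g = resolver_state A \<sigma>A (h @ labels es)"
  have u: "set (h @ labels es) \<subseteq> \<Sigma>"
    using h_in_\<Sigma> shadow_path_labels[OF es] by simp
  have "lang_from B q = residual L (h @ labels es)"
    using shadow_path_lang[OF es] lang_from_B_state[of "[]"] by (simp add: residual_append)
  then have "lang_from A g = lang_from B q"
    using lang_from_resolver_state_A[OF u] by (simp add: g_def)
  moreover have "shadow_lang q \<subseteq> safe_lang A g"
    unfolding g_def using u safe by (intro shadow_lang_subset_resolver_safe_lang) simp_all
  moreover have "g \<in> states A"
    using resolver_state_in_states[OF well_formed_A \<sigma>A] u alph_A by (simp add: g_def)
  ultimately have "covered q"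
    by (auto simp: covered_def)
  with shadow_path_target[OF es] show ?thesis by blast
qed

lemma shadow_trans_along_safe_path:
  assumes "path (safe_trans A) p0 (ts @ [t]) p"
  shows "(B_state (labels ts), fst (snd t), B_state (labels (ts @ [t]))) \<in> shadow_trans"
  using shadow_trans_snoc[OF assms] by clarsimp

lemma shadow_lang_nonempty:
  assumes "path (safe_trans A) p0 ts p"
  shows "shadow_lang (B_state (labels ts)) \<noteq> {}"
proof -
  have "safe_lang A p \<noteq> {}"
    using safe_lang_nonempty[OF well_formed_A normal_form_A S succ safe_path_in_S[OF assms p0]] .
  with safe_lang_subset_shadow_lang[OF assms] show ?thesis by blast
qed

lemma covered_shadow_trans:
  assumes "covered q" and step: "(q, a, q') \<in> shadow_trans" and "shadow_lang q' \<noteq> {}"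
  shows "covered q'"
proof -
  obtain g where g: "g \<in> states A" "lang_from A g = lang_from B q" "shadow_lang q \<subseteq> safe_lang A g"
    using assms(1) by (auto simp: covered_def)
  have step_path: "path shadow_trans q [(q, a, q')] q'"
    using step by simp
  have a_step: "conc [a] w \<in> run_lang (safe_trans A) g" if "w \<in> shadow_lang q'" for w
  proof -
    have "conc [a] w \<in> shadow_lang q"
      using run_lang_conc[OF step_path that] by simp
    with g(3) show ?thesis by (auto simp: safe_lang_eq_run_lang[OF well_formed_A])
  qed
  obtain w0 where "w0 \<in> shadow_lang q'" using assms(3) by blast
  from run_lang_split[OF a_step[OF this]]
  obtain ts g' where g': "path (safe_trans A) g ts g'" "labels ts = [a]"
    by blast
  have safe: "shadow_lang q' \<subseteq> safe_lang A g'"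
  proof
    fix w assume "w \<in> shadow_lang q'"
    with a_step have "w \<in> residual (run_lang (safe_trans A) g) (labels ts)"
      using g'(2) by (simp add: residual_def)
    then show "w \<in> safe_lang A g'"
      using run_lang_path_residual[OF deterministic_safe_trans_A g'(1)]
      by (simp add: safe_lang_eq_run_lang[OF well_formed_A])
  qed
  have g'_path: "path (trans A) g ts g'"
    using g'(1) safe_trans_subset by (rule path_mono)
  have "lang_from A g' = residual (lang_from A g) [a]"
    using lang_from_path_residual[OF gen_coBuchi_A _ g'_path] nice_A g'(2) by (simp add: nice_def)
  also have "\<dots> = lang_from B q'"
    using g(2) shadow_trans_lang[OF step] by simp
  finally show ?thesis
    using safe path_target_in_states[OF well_formed_A g'_path g(1)] by (auto simp: covered_def)
qed

lemma covered_along_safe_path: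
  assumes ts: "path (safe_trans A) p0 ts p" and "covered (B_state (labels ts))"
  shows "path (safe_trans A) p ts' p' \<Longrightarrow> covered (B_state (labels (ts @ ts')))"
proof (induction ts' arbitrary: p' rule: rev_induct)
  case Nil
  then show ?case using assms(2) by simp
next
  case (snoc t ts')
  then have "path (safe_trans A) p ts' (fst t)"
    by (simp add: path_snoc)
  with snoc.IH have "covered (B_state (labels (ts @ ts')))" .
  moreover have path: "path (safe_trans A) p0 ((ts @ ts') @ [t]) p'"
    using ts snoc.prems by (auto simp: path_append)
  ultimately have "covered (B_state (labels ((ts @ ts') @ [t])))"
    using covered_shadow_trans shadow_trans_along_safe_path[OF path] shadow_lang_nonempty[OF path]
    by blast
  then show ?case by simp
qed

lemma covered_everywhere:
  assumes "p \<in> S"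
  shows "\<exists>ts. path (safe_trans A) p0 ts p \<and> covered (B_state (labels ts))"
proof -
  obtain ts1 p1 where ts1: "path (safe_trans A) p0 ts1 p1" "covered (B_state (labels ts1))"
    using covered_exists by blast
  obtain ts2 where ts2: "path (safe_trans A) p1 ts2 p"
    using safe_component_connected[OF S safe_path_in_S[OF ts1(1) p0] assms] ..
  have "path (safe_trans A) p0 (ts1 @ ts2) p"
    using ts1(1) ts2 by (auto simp: path_append)
  with covered_along_safe_path[OF ts1 ts2] show ?thesis by blast
qed

lemma exact_shadow_exists:
  "\<exists>ts p. path (safe_trans A) p0 ts p \<and> shadow_lang (B_state (labels ts)) = safe_lang A p"
proof -
  have "finite (safe_lang A ` S)"
    using S_subset well_formed_A finite_subset by (auto simp: well_formed_def)
  then obtain pm where pm: "pm \<in> S"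
    and maximal: "\<And>p. p \<in> S \<Longrightarrow> safe_lang A pm \<subseteq> safe_lang A p \<Longrightarrow> safe_lang A pm = safe_lang A p"
    using finite_has_maximal[of "safe_lang A ` S"] p0 by blast
  obtain ts where ts: "path (safe_trans A) p0 ts pm" "covered (B_state (labels ts))"
    using covered_everywhere[OF pm] by blast
  then obtain g where g: "g \<in> states A" "lang_from A g = lang_from B (B_state (labels ts))"
    "shadow_lang (B_state (labels ts)) \<subseteq> safe_lang A g"
    by (auto simp: covered_def)
  have pm_shadow: "safe_lang A pm \<subseteq> shadow_lang (B_state (labels ts))"
    using safe_lang_subset_shadow_lang[OF ts(1)] .
  have "equivalent_states A pm g"
    using g(2) lang_from_B_state lang_from_safe_path[OF ts(1)] safe_path_labels_A[OF ts(1)]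
    by (simp add: equivalent_states_def)
  moreover have "safe_lang A pm \<subseteq> safe_lang A g"
    using pm_shadow g(3) by blast
  ultimately have "safe_component_of A pm = safe_component_of A g"
    using safe_centralised_A pm S_subset g(1) unfolding safe_centralised_def by blast
  then have "g \<in> S"
    using safe_component_of_self[OF g(1)] safe_component_of_eq[OF S pm] by simp
  with maximal \<open>safe_lang A pm \<subseteq> safe_lang A g\<close> have "safe_lang A pm = safe_lang A g"
    by blast
  with pm_shadow g(3) ts(1) show ?thesis by blast
qed

lemma shadow_path_of_safe_path:
  "path (safe_trans A) p0 (ts @ ts') p \<Longrightarrow>
    \<exists>es. path shadow_trans (B_state (labels ts)) es (B_state (labels (ts @ ts')))
      \<and> labels es = labels ts'"
proof (induction ts' arbitrary: p rule: rev_induct)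
  case Nil
  have "path shadow_trans (B_state (labels ts)) [] (B_state (labels (ts @ [])))" by simp
  then show ?case by (metis labels_simps(1))
next
  case (snoc t ts')
  then have path: "path (safe_trans A) p0 ((ts @ ts') @ [t]) p" by simp
  then have "path (safe_trans A) p0 (ts @ ts') (fst t)"
    unfolding path_snoc by blast
  then obtain es where "path shadow_trans (B_state (labels ts)) es (B_state (labels (ts @ ts')))"
    "labels es = labels ts'"
    using snoc.IH by blast
  moreover define e where
    "e = (B_state (labels (ts @ ts')), fst (snd t), B_state (labels ((ts @ ts') @ [t])))"
  have "e \<in> shadow_trans"
    unfolding e_def by (rule shadow_trans_along_safe_path[OF path])
  ultimately have "path shadow_trans (B_state (labels ts)) (es @ [e]) (B_state (labels (ts @ ts' @ [t])))
      \<and> labels (es @ [e]) = labels (ts' @ [t])"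
    by (simp add: path_snoc e_def)
  then show ?case by blast
qed

lemma exact_shadow_along_safe_path:
  assumes ts: "path (safe_trans A) p0 ts p"
    and exact: "shadow_lang (B_state (labels ts)) = safe_lang A p"
    and ts': "path (safe_trans A) p ts' p'"
  shows "shadow_lang (B_state (labels (ts @ ts'))) = safe_lang A p'"
proof
  have path: "path (safe_trans A) p0 (ts @ ts') p'"
    using ts ts' by (auto simp: path_append)
  then show "safe_lang A p' \<subseteq> shadow_lang (B_state (labels (ts @ ts')))"
    by (rule safe_lang_subset_shadow_lang)
  obtain es where es: "path shadow_trans (B_state (labels ts)) es (B_state (labels (ts @ ts')))"
    "labels es = labels ts'"
    using shadow_path_of_safe_path[OF path] by blast
  show "shadow_lang (B_state (labels (ts @ ts'))) \<subseteq> safe_lang A p'"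
  proof
    fix w assume "w \<in> shadow_lang (B_state (labels (ts @ ts')))"
    then have "conc (labels ts') w \<in> run_lang (safe_trans A) p"
      using run_lang_conc[OF es(1)] es(2) exact
      by (simp add: safe_lang_eq_run_lang[OF well_formed_A])
    then show "w \<in> safe_lang A p'"
      using run_lang_path_residual[OF deterministic_safe_trans_A ts']
      by (simp add: safe_lang_eq_run_lang[OF well_formed_A] residual_def)
  qed
qed

lemma injection_into_B:
  "\<exists>b. inj_on b S \<and> (\<forall>p\<in>S. b p \<in> states B \<and> lang_from B (b p) = lang_from A p)"
proof -
  obtain ts pm where pm: "path (safe_trans A) p0 ts pm"
    "shadow_lang (B_state (labels ts)) = safe_lang A pm"
    using exact_shadow_exists by blast
  have "\<forall>p\<in>S. \<exists>ts'. path (safe_trans A) pm ts' p"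
    using safe_component_connected[OF S safe_path_in_S[OF pm(1) p0]] by blast
  then obtain ts' where ts': "\<And>p. p \<in> S \<Longrightarrow> path (safe_trans A) pm (ts' p) p"
    by metis
  define b where "b p = B_state (labels (ts @ ts' p))" for p
  have path: "path (safe_trans A) p0 (ts @ ts' p) p" if "p \<in> S" for p
    using pm(1) ts'[OF that] by (auto simp: path_append)
  have shadow: "shadow_lang (b p) = safe_lang A p" if "p \<in> S" for p
    unfolding b_def using exact_shadow_along_safe_path[OF pm ts'[OF that]] .
  have lang: "lang_from B (b p) = lang_from A p" if "p \<in> S" for p
    using lang_from_B_state lang_from_safe_path[OF path[OF that]]
      safe_path_labels_A[OF path[OF that]]
    by (simp add: b_def)
  have "inj_on b S"
  proof (rule inj_onI)
    fix p p' assume "p \<in> S" "p' \<in> S" "b p = b p'"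
    then have "safe_lang A p = safe_lang A p'" "equivalent_states A p p'"
      using shadow lang by (metis, metis equivalent_states_def)
    with \<open>p \<in> S\<close> \<open>p' \<in> S\<close> S_subset safe_minimal_A show "p = p'"
      unfolding safe_minimal_def by blast
  qed
  moreover have "b p \<in> states B" if "p \<in> S" for p
    using resolver_state_in_states[OF well_formed_B \<sigma>B] h_in_\<Sigma>
      safe_path_labels_A[OF path[OF that]] alph_B
    by (simp add: b_def B_state_def)
  ultimately show ?thesis using lang by blast
qed

end

context hd_component
begin

lemma injection_into_B:
  "\<exists>b. inj_on b S \<and> (\<forall>p\<in>S. b p \<in> states B \<and> lang_from B (b p) = lang_from A p)"
proof (cases "\<forall>p\<in>S. \<exists>a p'. (p, a, p') \<in> safe_trans A \<and> p' \<in> S")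
  case True
  show ?thesis
  proof (cases "S = {}")
    case False
    with True obtain h p0 c where "colour_free_region B C A L \<Sigma> \<sigma>B \<sigma>A S h p0 c"
      using colour_free_region_exists hd_component_axioms
      unfolding colour_free_region_def colour_free_region_axioms_def by blast
    then show ?thesis by (rule colour_free_region.injection_into_B)
  qed simp
next
  case False
  then obtain p where p: "p \<in> S" "\<nexists>a p'. (p, a, p') \<in> safe_trans A \<and> p' \<in> S"
    by blast
  then have "S = {p}"
    using safe_component_singleton[OF well_formed_A normal_form_A S] by blast
  obtain ts where ts: "path (trans A) (init A) ts p"
    using path_from_init_A S_subset p(1) by blast
  let ?b = "\<lambda>_. resolver_state B \<sigma>B (labels ts)"
  have "?b p \<in> states B"
    using resolver_state_in_states[OF well_formed_B \<sigma>B] path_labels_A[OF ts] alph_B by simp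
  moreover have "lang_from B (?b p) = lang_from A p"
    using lang_from_resolver_state_B path_labels_A[OF ts] lang_from_path_from_init_A[OF ts] by simp
  ultimately show ?thesis
    using \<open>S = {p}\<close> by auto
qed

end

theorem proposition24:
  fixes B :: "('p, 'a, 'c set) automaton" and C :: "'c set"
    and Amin :: "('q, 'a, nat set) automaton"
    and L :: "(nat \<Rightarrow> 'a) set" and \<Sigma> :: "'a set"
  assumes "gen_coBuchi B C" and "history_deterministic B"
    and "alph B = \<Sigma>" and "lang B = L"
    and "coBuchi Amin" and "history_deterministic Amin"
    and "alph Amin = \<Sigma>" and "lang Amin = L"
    and "nice Amin" and "safe_minimal Amin" and "safe_centralised Amin"
  shows "(\<Sum>R\<in>residuals \<Sigma> L. Max {card (S \<inter> states_of_residual Amin R) | S. S \<in> safe_components Amin})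
           \<le> card (states B)"
proof (rule sum_max_residual_le_card)
  obtain \<sigma>B where "resolver B \<sigma>B" using assms(2) by (auto simp: history_deterministic_def)
  moreover obtain \<sigma>A where "resolver Amin \<sigma>A"
    using assms(6) by (auto simp: history_deterministic_def)
  ultimately interpret hd_coBuchi_pair B C Amin L \<Sigma> \<sigma>B \<sigma>A
    using assms by unfold_locales
  show "finite (states B)"
    using well_formed_B by (simp add: well_formed_def)
  show "finite (safe_components Amin)" "safe_components Amin \<noteq> {}"
    using well_formed_A by (auto simp: safe_components_def well_formed_def)
  show "\<exists>b. inj_on b S \<and> (\<forall>p\<in>S. b p \<in> states B \<and> lang_from B (b p) = lang_from Amin p)"
    if "S \<in> safe_components Amin" for S
    using hd_component.injection_into_B[unfolded hd_component_def hd_component_axioms_def]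
      hd_coBuchi_pair_axioms that by blast
qed

end
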